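(* Let $X,Y$ be Tychonoff spaces and $f:X\to Y$ a meshing map, and let $f_\beta:\beta X\to\beta Y$ be the continuous extension of $f$. Then for any two distinct points $x_1,x_2\in N(X)$ with $f(x_1)=f(x_2)$ there exist neighbourhoods $U_1$ of $x_1$ and $U_2$ of $x_2$ in $\beta X$ such that $f_\beta(U_1)\cap f_\beta(U_2)$ is a compact subset of $Y$.
   Context: $\beta X$ denotes the Stone–Čech compactification. A space $X$ is Menger if for each sequence $(\mathcal{U}_n)$ of open covers of $X$ there is a sequence $(\mathcal{V}_n)$ with each $\mathcal{V}_n$ a finite subset of $\mathcal{U}_n$ and $\bigcup_{n}\bigcup\mathcal{V}_n=X$. $X$ is locally Menger at $x$ if there are an open set $U$ and a Menger subspace $M$ of $X$ with $x\in U\subseteq M$; $N(X)$ denotes the set of points of $X$ at which $X$ is not locally Menger. A continuous surjection $f:X\to Y$ is a meshing map if there are compactifications $bX$ of $X$ and $cY$ of $Y$ and a continuous extension $\tilde f:bX\to cY$ of $f$ onto $cY$ such that $\tilde f|_{bX\setminus X}$ is a homeomorphism onto $cY\setminus Y$. *)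

theory Defs
  imports "HOL-Analysis.Analysis"
begin

definition tychonoff_space :: "'a topology \<Rightarrow> bool" where
  "tychonoff_space X \<longleftrightarrow> completely_regular_space X \<and> Hausdorff_space X"

definition compactification :: "'a topology \<Rightarrow> 'b topology \<Rightarrow> ('a \<Rightarrow> 'b) \<Rightarrow> bool" where
  "compactification X bX e \<longleftrightarrow>
     compact_space bX \<and> Hausdorff_space bX \<and> embedding_map X bX e \<and>
     bX closure_of (e ` topspace X) = topspace bX"

definition stone_cech :: "'a topology \<Rightarrow> 'b topology \<Rightarrow> ('a \<Rightarrow> 'b) \<Rightarrow> bool" where
  "stone_cech X bX e \<longleftrightarrow> compactification X bX e \<and>
     (\<forall>g. continuous_map X (subtopology euclideanreal {0..1}) g \<longrightarrow>
        (\<exists>h. continuous_map bX (subtopology euclideanreal {0..1}) h \<and>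
             (\<forall>x\<in>topspace X. h (e x) = g x)))"

definition meshing_witness ::
  "'a topology \<Rightarrow> 'b topology \<Rightarrow> ('a \<Rightarrow> 'b) \<Rightarrow> 'c topology \<Rightarrow> ('a \<Rightarrow> 'c) \<Rightarrow>
   'd topology \<Rightarrow> ('b \<Rightarrow> 'd) \<Rightarrow> ('c \<Rightarrow> 'd) \<Rightarrow> bool" where
  "meshing_witness X Y f bX eb cY ec g \<longleftrightarrow>
     continuous_map X Y f \<and> f ` topspace X = topspace Y \<and>
     compactification X bX eb \<and> compactification Y cY ec \<and>
     continuous_map bX cY g \<and> g ` topspace bX = topspace cY \<and>
     (\<forall>x\<in>topspace X. g (eb x) = ec (f x)) \<and>
     homeomorphic_map (subtopology bX (topspace bX - eb ` topspace X))
                      (subtopology cY (topspace cY - ec ` topspace Y)) g"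

definition menger_space :: "'a topology \<Rightarrow> bool" where
  "menger_space X \<longleftrightarrow>
     (\<forall>\<U> :: nat \<Rightarrow> 'a set set.
        (\<forall>n. (\<forall>U\<in>\<U> n. openin X U) \<and> \<Union>(\<U> n) = topspace X) \<longrightarrow>
        (\<exists>\<V>. (\<forall>n. finite (\<V> n) \<and> \<V> n \<subseteq> \<U> n) \<and> (\<Union>n. \<Union>(\<V> n)) = topspace X))"

definition locally_menger_at :: "'a topology \<Rightarrow> 'a \<Rightarrow> bool" where
  "locally_menger_at X x \<longleftrightarrow>
     (\<exists>U M. openin X U \<and> x \<in> U \<and> U \<subseteq> M \<and> M \<subseteq> topspace X \<and>
            menger_space (subtopology X M))"

definition non_locally_menger :: "'a topology \<Rightarrow> 'a set" where
  "non_locally_menger X = {x \<in> topspace X. \<not> locally_menger_at X x}"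

definition neighbourhood_of :: "'a topology \<Rightarrow> 'a \<Rightarrow> 'a set \<Rightarrow> bool" where
  "neighbourhood_of X x N \<longleftrightarrow> (\<exists>V. openin X V \<and> x \<in> V \<and> V \<subseteq> N \<and> N \<subseteq> topspace X)"

end

theory Submission
  imports Defs
begin

text \<open>The extension g of a meshing map is injective on the remainder of bX and sends X into Y,
  so two disjoint subsets of bX have images that meet only inside Y. Separate the images of
  x1 and x2 in bX by disjoint closed neighbourhoods and pull them back to BX along the
  Stone-Cech extension h of eb. The extension k of ec to BY satisfies k \<circ> fb = g \<circ> h and
  k maps no remainder point of BY into Y, so the compact set fb U1 \<inter> fb U2 lies in Y.\<close>

lemma embedding_map_imp_continuous_map: "embedding_map X Y f \<Longrightarrow> continuous_map X Y f"
  unfolding embedding_map_def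
  using continuous_map_in_subtopology homeomorphic_imp_continuous_map by blast

lemma compactification_map_in_topspace:
  "compactification X BX eX \<Longrightarrow> x \<in> topspace X \<Longrightarrow> eX x \<in> topspace BX"
  unfolding compactification_def
  using embedding_map_imp_continuous_map continuous_map_image_subset_topspace by blast

lemma compactification_inj_on: "compactification X BX eX \<Longrightarrow> inj_on eX (topspace X)"
  unfolding compactification_def embedding_map_def using homeomorphic_imp_injective_map by blast

lemma compactification_continuous_maps_eq:
  assumes "compactification X BX eX" "Hausdorff_space Z"
    and "continuous_map BX Z h" "continuous_map BX Z k"
    and "\<And>x. x \<in> topspace X \<Longrightarrow> h (eX x) = k (eX x)"
    and "p \<in> topspace BX"
  shows "h p = k p"
  using assms forall_in_closure_of_eq[of p BX "eX ` topspace X" Z h k]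
  unfolding compactification_def by auto

lemma compactification_image_subset_closedin:
  assumes "compactification X BX eX" "continuous_map BX Z h" "closedin Z C"
    and "\<And>x. x \<in> topspace X \<Longrightarrow> h (eX x) \<in> C"
  shows "h ` topspace BX \<subseteq> C"
proof -
  have "h ` topspace BX = h ` (BX closure_of (eX ` topspace X))"
    using assms(1) unfolding compactification_def by simp
  also have "\<dots> \<subseteq> Z closure_of (h ` eX ` topspace X)"
    using continuous_map_image_closure_subset[OF assms(2)] .
  also have "\<dots> \<subseteq> C"
    using assms(3,4) by (intro closure_of_minimal) auto
  finally show ?thesis .
qed

lemma stone_cech_extension_cube:
  assumes sc: "stone_cech X BX eX"
    and u: "continuous_map X (product_topology (\<lambda>_. top_of_set {0..1::real}) I) u"
  obtains H where "continuous_map BX (product_topology (\<lambda>_. top_of_set {0..1::real}) I) H"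
    and "\<And>x. x \<in> topspace X \<Longrightarrow> H (eX x) = u x"
proof -
  have "\<exists>h. continuous_map BX (top_of_set {0..1}) h \<and> (\<forall>x\<in>topspace X. h (eX x) = u x i)"
    if "i \<in> I" for i
  proof -
    have "continuous_map X (top_of_set {0..1}) (\<lambda>x. u x i)"
      using u that by (auto simp: continuous_map_componentwise)
    then show ?thesis
      using sc unfolding stone_cech_def by blast
  qed
  then obtain h where h: "\<And>i. i \<in> I \<Longrightarrow> continuous_map BX (top_of_set {0..1}) (h i)"
    and heX: "\<And>i x. i \<in> I \<Longrightarrow> x \<in> topspace X \<Longrightarrow> h i (eX x) = u x i"
    by metis
  show ?thesis
  proof
    show "continuous_map BX (product_topology (\<lambda>_. top_of_set {0..1}) I) (\<lambda>p. \<lambda>i\<in>I. h i p)"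
      by (auto simp: continuous_map_componentwise h)
    fix x assume x: "x \<in> topspace X"
    then have "u x \<in> extensional I"
      using continuous_map_image_subset_topspace[OF u] by (auto simp: PiE_def)
    then show "(\<lambda>i\<in>I. h i (eX x)) = u x"
      using heX[OF _ x] by (auto simp: extensional_def)
  qed
qed

text \<open>Every compact Hausdorff space embeds as a closed subset of a cube, where the
  extension is built componentwise.\<close>

lemma stone_cech_extension:
  fixes K :: "'k topology"
  assumes sc: "stone_cech X BX eX" and K: "compact_space K" "Hausdorff_space K"
    and u: "continuous_map X K u"
  obtains k where "continuous_map BX K k" "\<And>x. x \<in> topspace X \<Longrightarrow> k (eX x) = u x"
proof -
  have "completely_regular_space K"
    using K normal_imp_completely_regular_space compact_Hausdorff_or_regular_imp_normal_space
    by blast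
  then obtain I :: "('k \<Rightarrow> real) set" and e
    where emb: "embedding_map K (product_topology (\<lambda>_. top_of_set {0..1::real}) I) e"
    using completely_regular_space_cube_embedding K(2) by metis
  define P where "P = product_topology (\<lambda>_. top_of_set {0..1::real}) I"
  have e: "continuous_map K P e"
    using emb embedding_map_imp_continuous_map P_def by blast
  obtain H where H: "continuous_map BX P H" and HeX: "\<And>x. x \<in> topspace X \<Longrightarrow> H (eX x) = e (u x)"
    using stone_cech_extension_cube[OF sc continuous_map_compose[OF u e, unfolded P_def]]
    unfolding P_def o_def by metis
  have "closedin P (e ` topspace K)"
  proof (rule compactin_imp_closedin)
    show "Hausdorff_space P"
      unfolding P_def by (simp add: Hausdorff_space_product_topology Hausdorff_space_subtopology)
    show "compactin P (e ` topspace K)"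
      using K(1) e image_compactin compact_space_def by blast
  qed
  moreover have "compactification X BX eX"
    using sc stone_cech_def by blast
  ultimately have "H ` topspace BX \<subseteq> e ` topspace K"
    using compactification_image_subset_closedin[OF _ H] HeX continuous_map_image_subset_topspace[OF u]
    by blast
  then have H': "continuous_map BX (subtopology P (e ` topspace K)) H"
    using H by (simp add: continuous_map_in_subtopology image_subset_iff_funcset)
  obtain e' where e': "homeomorphic_maps K (subtopology P (e ` topspace K)) e e'"
    using emb unfolding embedding_map_def P_def homeomorphic_map_maps by blast
  show ?thesis
  proof
    show "continuous_map BX K (e' \<circ> H)"
      using continuous_map_compose[OF H'] e' unfolding homeomorphic_maps_def by blast
    show "(e' \<circ> H) (eX x) = u x" if "x \<in> topspace X" for x
      using e' that HeX continuous_map_image_subset_topspace[OF u]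
      unfolding homeomorphic_maps_def by auto
  qed
qed

text \<open>A second point q in the fibre could be separated from eY y by an open set, whose trace
  on Y avoids a neighbourhood of y; but continuity of k and density of Y force points of Y
  near q to lie in that neighbourhood.\<close>

lemma compactification_extension_fibre:
  assumes cB: "compactification Y BY eY" and cc: "compactification Y cY ec"
    and k: "continuous_map BY cY k" and kc: "\<And>y. y \<in> topspace Y \<Longrightarrow> k (eY y) = ec y"
    and q: "q \<in> topspace BY" and y: "y \<in> topspace Y" and kq: "k q = ec y"
  shows "q = eY y"
proof (rule ccontr)
  assume "q \<noteq> eY y"
  have eY: "continuous_map Y BY eY"
    using cB embedding_map_imp_continuous_map unfolding compactification_def by blast
  have "Hausdorff_space BY" "eY y \<in> topspace BY"
    using cB compactification_map_in_topspace[OF cB y] unfolding compactification_def by auto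
  then obtain A B where A: "openin BY A" and B: "openin BY B" and "eY y \<in> A" "q \<in> B"
    and "disjnt A B"
    using \<open>q \<noteq> eY y\<close> q unfolding Hausdorff_space_def by metis
  define A' where "A' = {z \<in> topspace Y. eY z \<in> A}"
  have hm: "homeomorphic_map Y (subtopology cY (ec ` topspace Y)) ec"
    using cc unfolding compactification_def embedding_map_def by blast
  have "openin (subtopology cY (ec ` topspace Y)) (ec ` A')"
    using homeomorphic_map_openness[OF hm, of A'] openin_continuous_map_preimage[OF eY A]
    unfolding A'_def by auto
  then obtain G where G: "openin cY G" and GA': "ec ` A' = G \<inter> ec ` topspace Y"
    unfolding openin_subtopology by blast
  define B' where "B' = B \<inter> {p \<in> topspace BY. k p \<in> G}"
  have "openin BY B'"
    unfolding B'_def using B openin_continuous_map_preimage[OF k G] by blast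
  moreover have "q \<in> B'"
    using kq GA' y \<open>eY y \<in> A\<close> \<open>q \<in> B\<close> q unfolding A'_def B'_def by blast
  moreover have "q \<in> BY closure_of (eY ` topspace Y)"
    using cB q unfolding compactification_def by simp
  ultimately obtain z where z: "z \<in> topspace Y" "eY z \<in> B'"
    unfolding in_closure_of by blast
  then have "ec z \<in> ec ` A'"
    using kc GA' unfolding B'_def by auto
  then have "eY z \<in> A"
    using z(1) compactification_inj_on[OF cc] unfolding A'_def by (auto dest: inj_onD)
  then show False
    using z(2) \<open>disjnt A B\<close> unfolding B'_def disjnt_def by blast
qed

lemma meshing_witness_image_Int_subset:
  assumes mw: "meshing_witness X Y f bX eb cY ec g"
    and V: "V1 \<subseteq> topspace bX" "V2 \<subseteq> topspace bX" "disjnt V1 V2"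
  shows "g ` V1 \<inter> g ` V2 \<subseteq> ec ` topspace Y"
proof
  fix c assume "c \<in> g ` V1 \<inter> g ` V2"
  then obtain p1 p2 where p: "p1 \<in> V1" "p2 \<in> V2" "g p1 = c" "g p2 = c"
    by auto
  show "c \<in> ec ` topspace Y"
  proof (rule ccontr)
    assume c: "c \<notin> ec ` topspace Y"
    have f: "continuous_map X Y f" and geb: "\<And>x. x \<in> topspace X \<Longrightarrow> g (eb x) = ec (f x)"
      using mw unfolding meshing_witness_def by auto
    have "p \<notin> eb ` topspace X" if "g p = c" for p
      using that c geb continuous_map_image_subset_topspace[OF f] by auto
    moreover have "inj_on g (topspace bX - eb ` topspace X)"
      using mw homeomorphic_imp_injective_map unfolding meshing_witness_def
      by (metis Diff_subset topspace_subtopology_subset)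
    ultimately have "p1 = p2"
      using p V by (blast dest: inj_onD)
    then show False
      using p V(3) unfolding disjnt_def by blast
  qed
qed

lemma compact_Hausdorff_separate_points_closed_neighbourhoods:
  assumes "compact_space X" "Hausdorff_space X"
    and "x \<in> topspace X" "y \<in> topspace X" "x \<noteq> y"
  obtains V1 V2 where "closedin X V1" "closedin X V2"
    "neighbourhood_of X x V1" "neighbourhood_of X y V2" "disjnt V1 V2"
proof -
  have "normal_space X"
    using assms compact_Hausdorff_or_regular_imp_normal_space by blast
  moreover have "closedin X {x}" "closedin X {y}" "disjnt {x} {y}"
    using assms closedin_Hausdorff_singleton by auto
  ultimately obtain U1 U2 where U: "openin X U1" "openin X U2" "{x} \<subseteq> U1" "{y} \<subseteq> U2"
    and "disjnt (X closure_of U1) (X closure_of U2)"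
    unfolding normal_space_disjoint_closures by meson
  moreover have nbhd: "neighbourhood_of X z (X closure_of U)" if "openin X U" "z \<in> U" for z U
    using that unfolding neighbourhood_of_def
    by (meson closure_of_subset closure_of_subset_topspace openin_subset)
  ultimately show ?thesis
    using that[OF closedin_closure_of closedin_closure_of nbhd nbhd] U by auto
qed

lemma neighbourhood_of_continuous_map_preimage:
  assumes "continuous_map X Y h" "x \<in> topspace X" "neighbourhood_of Y (h x) N"
  shows "neighbourhood_of X x {p \<in> topspace X. h p \<in> N}"
proof -
  obtain W where "openin Y W" "h x \<in> W" "W \<subseteq> N"
    using assms(3) unfolding neighbourhood_of_def by blast
  then show ?thesis
    unfolding neighbourhood_of_def
    using assms(1,2) openin_continuous_map_preimage[of X Y h W] by blast
qed

lemma compactin_in_embedding_image: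
  assumes "embedding_map Y Z e" "compactin Z S" "S \<subseteq> e ` topspace Y"
  obtains K where "compactin Y K" "S = e ` K"
proof
  define K where "K = {y \<in> topspace Y. e y \<in> S}"
  show "S = e ` K"
    using assms(3) unfolding K_def by blast
  then have "compactin (subtopology Z (e ` topspace Y)) (e ` K)"
    using assms(2,3) by (simp add: compactin_subtopology)
  moreover have "homeomorphic_map Y (subtopology Z (e ` topspace Y)) e"
    using assms(1) unfolding embedding_map_def .
  ultimately show "compactin Y K"
    using homeomorphic_map_compactness[of Y _ e K] unfolding K_def by blast
qed

text \<open>Both g \<circ> h and k \<circ> fb extend ec \<circ> f to BX, so they agree; hence k sends the
  intersection into g V1 \<inter> g V2 \<subseteq> Y, whose preimage under k is Y.\<close>

lemma stone_cech_meshing_image_Int_subset: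
  assumes mw: "meshing_witness X Y f bX eb cY ec g"
    and cBX: "compactification X BX eX" and scY: "stone_cech Y BY eY"
    and fb: "continuous_map BX BY fb" "\<And>x. x \<in> topspace X \<Longrightarrow> fb (eX x) = eY (f x)"
    and h: "continuous_map BX bX h" "\<And>x. x \<in> topspace X \<Longrightarrow> h (eX x) = eb x"
    and V: "V1 \<subseteq> topspace bX" "V2 \<subseteq> topspace bX" "disjnt V1 V2"
  shows "fb ` {p \<in> topspace BX. h p \<in> V1} \<inter> fb ` {p \<in> topspace BX. h p \<in> V2}
           \<subseteq> eY ` topspace Y"
proof
  have cY: "compactification Y cY ec" and g: "continuous_map bX cY g"
    and f: "continuous_map X Y f" and geb: "\<And>x. x \<in> topspace X \<Longrightarrow> g (eb x) = ec (f x)"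
    using mw unfolding meshing_witness_def by auto
  then obtain k where k: "continuous_map BY cY k" and keY: "\<And>y. y \<in> topspace Y \<Longrightarrow> k (eY y) = ec y"
    using stone_cech_extension[OF scY] embedding_map_imp_continuous_map
    unfolding compactification_def by metis
  have comm: "(k \<circ> fb) p = (g \<circ> h) p" if "p \<in> topspace BX" for p
  proof (rule compactification_continuous_maps_eq[OF cBX _ _ _ _ that])
    show "Hausdorff_space cY"
      using cY unfolding compactification_def by blast
    show "continuous_map BX cY (k \<circ> fb)" "continuous_map BX cY (g \<circ> h)"
      using continuous_map_compose fb(1) k h(1) g by blast+
    show "(k \<circ> fb) (eX x) = (g \<circ> h) (eX x)" if "x \<in> topspace X" for x
      using that fb(2) h(2) keY geb continuous_map_image_subset_topspace[OF f] by auto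
  qed
  fix q assume "q \<in> fb ` {p \<in> topspace BX. h p \<in> V1} \<inter> fb ` {p \<in> topspace BX. h p \<in> V2}"
  then obtain p1 p2 where p: "p1 \<in> topspace BX" "h p1 \<in> V1" "p2 \<in> topspace BX" "h p2 \<in> V2"
    and q: "q = fb p1" "q = fb p2"
    by blast
  then have "k q \<in> g ` V1 \<inter> g ` V2"
    using comm by (metis IntI image_eqI o_apply)
  then obtain y where y: "y \<in> topspace Y" "k q = ec y"
    using meshing_witness_image_Int_subset[OF mw V] by blast
  moreover have "q \<in> topspace BY"
    using p q continuous_map_image_subset_topspace[OF fb(1)] by blast
  ultimately have "q = eY y"
    using compactification_extension_fibre[OF _ cY k keY] scY unfolding stone_cech_def by blast
  then show "q \<in> eY ` topspace Y"
    using y by blast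
qed

theorem theorem5p22:
  fixes X :: "'a topology" and Y :: "'b topology" and f :: "'a \<Rightarrow> 'b"
    and bX :: "'c topology" and eb :: "'a \<Rightarrow> 'c"
    and cY :: "'d topology" and ec :: "'b \<Rightarrow> 'd" and g :: "'c \<Rightarrow> 'd"
    and BX :: "'e topology" and eX :: "'a \<Rightarrow> 'e"
    and BY :: "'f topology" and eY :: "'b \<Rightarrow> 'f"
    and fb :: "'e \<Rightarrow> 'f"
  assumes "tychonoff_space X" and "tychonoff_space Y"
    and "meshing_witness X Y f bX eb cY ec g"
    and "stone_cech X BX eX" and "stone_cech Y BY eY"
    and "continuous_map BX BY fb"
    and "\<forall>x\<in>topspace X. fb (eX x) = eY (f x)"
    and "x1 \<in> non_locally_menger X" and "x2 \<in> non_locally_menger X"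
    and "x1 \<noteq> x2" and "f x1 = f x2"
  shows "\<exists>U1 U2 K. neighbourhood_of BX (eX x1) U1 \<and> neighbourhood_of BX (eX x2) U2 \<and>
           compactin Y K \<and> fb ` U1 \<inter> fb ` U2 = eY ` K"
proof -
  have x: "x1 \<in> topspace X" "x2 \<in> topspace X"
    using assms(8,9) unfolding non_locally_menger_def by auto
  have cbX: "compactification X bX eb" and cBX: "compactification X BX eX"
    and cBY: "compactification Y BY eY"
    using assms(3-5) unfolding meshing_witness_def stone_cech_def by auto
  obtain h where h: "continuous_map BX bX h" "\<And>x. x \<in> topspace X \<Longrightarrow> h (eX x) = eb x"
    using stone_cech_extension[OF assms(4)] cbX embedding_map_imp_continuous_map
    unfolding compactification_def by metis
  have "eb x1 \<in> topspace bX" "eb x2 \<in> topspace bX" "eb x1 \<noteq> eb x2"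
    using x assms(10) compactification_map_in_topspace[OF cbX] compactification_inj_on[OF cbX]
    by (auto dest: inj_onD)
  then obtain V1 V2 where V: "closedin bX V1" "closedin bX V2"
    "neighbourhood_of bX (eb x1) V1" "neighbourhood_of bX (eb x2) V2" "disjnt V1 V2"
    using compact_Hausdorff_separate_points_closed_neighbourhoods cbX
    unfolding compactification_def by metis
  define U where "U V = {p \<in> topspace BX. h p \<in> V}" for V
  have "neighbourhood_of BX (eX x1) (U V1)" "neighbourhood_of BX (eX x2) (U V2)"
    unfolding U_def using neighbourhood_of_continuous_map_preimage[OF h(1)] V(3,4) x h(2)
      compactification_map_in_topspace[OF cBX] by auto
  moreover have "compactin BY (fb ` U V1 \<inter> fb ` U V2)"
    unfolding U_def using cBX cBY V(1,2) unfolding compactification_def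
    by (intro compactin_Int image_compactin[OF _ assms(6)] closedin_compact_space
        closedin_continuous_map_preimage[OF h(1)]) auto
  moreover have "fb ` U V1 \<inter> fb ` U V2 \<subseteq> eY ` topspace Y"
    using stone_cech_meshing_image_Int_subset[OF assms(3) cBX assms(5,6) _ h] assms(7) V
    unfolding U_def by (simp add: closedin_subset)
  ultimately show ?thesis
    using compactin_in_embedding_image cBY unfolding compactification_def by metis
qed

end
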